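(* Fix $p \in (0,1)$ and $r \in (0,1)$. For each positive integer $k$, let $n_k > 0$ be a number satisfying \[ I_{1-p}(n_k, k+1) = r, \] where $I_z(a,b)$ denotes the regularized incomplete beta function. Then $\frac{n_k}{k}$ tends to a limit as $k \to \infty$ which does not depend on $r$, namely \[ \lim_{k \to \infty} \frac{n_k}{k} = \frac{1}{p} - 1 . \]
   Context: The regularized incomplete beta function is $I_z(a,b) = \frac{\int_0^z t^{a-1}(1-t)^{b-1}\,dt}{\int_0^1 t^{a-1}(1-t)^{b-1}\,dt}$ for $z\in[0,1]$, $a,b>0$. For positive integers $n,k$ one has $I_{1-p}(n,k+1) = \sum_{x=0}^{k} \binom{n+k}{x} p^x (1-p)^{n+k-x}$, i.e. the probability that at most $k$ of $n+k$ independent nodes, each failing with probability $p$, fail. In the paper's setting $n$ is the number of critical nodes of a virtual infrastructure, $k$ the number of backup nodes, $p$ the independent per-node failure probability, and $r$ the reliability guarantee. *)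

theory Defs
  imports "HOL-Analysis.Analysis"
begin

text \<open>Incomplete beta integral B(z;a,b) = int_0^z t^(a-1) (1-t)^(b-1) dt
  (Henstock-Kurzweil integral; the integrand is nonnegative, so this agrees
  with the Lebesgue / improper Riemann integral for a, b > 0).\<close>
definition inc_beta :: "real \<Rightarrow> real \<Rightarrow> real \<Rightarrow> real" where
  "inc_beta z a b = integral {0..z} (\<lambda>t. t powr (a - 1) * (1 - t) powr (b - 1))"

definition reg_inc_beta :: "real \<Rightarrow> real \<Rightarrow> real \<Rightarrow> real" where
  "reg_inc_beta z a b = inc_beta z a b / inc_beta 1 a b"

end

theory Submission imports Defs begin

text \<open>Under the Beta density t^(a-1) (1-t)^(b-1) / B(a,b) a random variable has mean
  m = a/(a+b) and variance a b / ((a+b)^2 (a+b+1)) \<le> 1/(a+b+1).  By Chebyshev's inequality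
  the distribution function I_z(a,b) is therefore close to 0 for z < m and close to 1 for
  z > m once a + b is large.  Since I_{1-p}(n_k, k+1) = r stays away from both 0 and 1,
  the mean n_k / (n_k + k + 1) must converge to 1 - p, and solving for n_k gives
  n_k / k \<longrightarrow> (1 - p) / p.\<close>

lemma has_integral_Beta_power_moment:
  fixes a b :: real
  assumes "a > 0" "b > 0"
  shows "((\<lambda>t. t ^ j * (t powr (a - 1) * (1 - t) powr (b - 1))) has_integral Beta (a + real j) b) {0..1}"
proof (rule has_integral_eq[OF _ has_integral_Beta_real[of "a + real j" b]])
  fix t :: real assume "t \<in> {0..1}"
  show "t powr (a + real j - 1) * (1 - t) powr (b - 1) = t ^ j * (t powr (a - 1) * (1 - t) powr (b - 1))"
  proof (cases "t = 0")
    case False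
    with \<open>t \<in> {0..1}\<close> have "t > 0" by simp
    then have "t powr (real j + (a - 1)) = t ^ j * t powr (a - 1)"
      by (simp add: powr_add powr_realpow)
    moreover have "a + real j - 1 = real j + (a - 1)" by simp
    ultimately have "t powr (a + real j - 1) = t ^ j * t powr (a - 1)" by metis
    then show ?thesis by simp
  qed simp
qed (use assms in auto)

lemma Beta_plus1_left_real:
  fixes a b :: real
  assumes "a > 0" "b > 0"
  shows "Beta (a + 1) b = a / (a + b) * Beta a b"
proof -
  have "a \<notin> \<int>\<^sub>\<le>\<^sub>0" using assms by (auto elim!: nonpos_Ints_cases)
  from Beta_plus1_left[OF this, of b] show ?thesis
    using assms by (simp add: field_simps)
qed

lemma has_integral_Beta_variance:
  fixes a b :: real
  assumes a: "a > 0" and b: "b > 0"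
  defines "m \<equiv> a / (a + b)"
  shows "((\<lambda>t. (t - m)^2 * (t powr (a - 1) * (1 - t) powr (b - 1)))
           has_integral Beta a b * (a * b / ((a + b)^2 * (a + b + 1)))) {0..1}"
proof -
  let ?f = "\<lambda>t. t powr (a - 1) * (1 - t) powr (b - 1)"
  have B1: "Beta (a + 1) b = m * Beta a b"
    using Beta_plus1_left_real[OF a b] by (simp add: m_def)
  have B2: "Beta (a + 2) b = (a + 1) / (a + b + 1) * Beta (a + 1) b"
    using Beta_plus1_left_real[of "a + 1" b] a b by (simp add: add_ac)
  have "((\<lambda>t. t^2 * ?f t - 2 * m * (t^1 * ?f t) + m^2 * (t^0 * ?f t)) has_integral
          Beta (a + 2) b - 2 * m * Beta (a + 1) b + m^2 * Beta a b) {0..1}"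
    using has_integral_Beta_power_moment[OF a b, of 0] has_integral_Beta_power_moment[OF a b, of 1]
      has_integral_Beta_power_moment[OF a b, of 2]
    by (intro has_integral_add has_integral_diff has_integral_mult_right) simp_all
  moreover have "Beta (a + 2) b - 2 * m * Beta (a + 1) b + m^2 * Beta a b
      = Beta a b * (m * ((a + 1) / (a + b + 1) - m))"
    unfolding B2 B1 by (simp add: power2_eq_square algebra_simps)
  moreover have "m * ((a + 1) / (a + b + 1) - m) = a * b / ((a + b)^2 * (a + b + 1))"
  proof -
    have "a + b \<noteq> 0" "a + b + 1 \<noteq> 0" using a b by linarith+
    then show ?thesis unfolding m_def by (simp add: field_simps power2_eq_square)
  qed
  ultimately have "((\<lambda>t. t^2 * ?f t - 2 * m * (t^1 * ?f t) + m^2 * (t^0 * ?f t)) has_integral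
      Beta a b * (a * b / ((a + b)^2 * (a + b + 1)))) {0..1}"
    by simp
  then show ?thesis
    by (rule has_integral_eq[rotated]) (simp add: power2_eq_square algebra_simps)
qed

lemma Beta_variance_le:
  fixes a b :: real
  assumes "a > 0" "b > 0"
  shows "a * b / ((a + b)^2 * (a + b + 1)) \<le> 1 / (a + b + 1)"
proof -
  have "a * b \<le> (a + b)^2" using assms by (simp add: power2_eq_square algebra_simps)
  then have "a * b / ((a + b)^2 * (a + b + 1)) \<le> (a + b)^2 / ((a + b)^2 * (a + b + 1))"
    using assms by (intro divide_right_mono) auto
  also have "\<dots> = 1 / (a + b + 1)" using assms by simp
  finally show ?thesis .
qed

lemma Chebyshev_integral_tails:
  fixes f :: "real \<Rightarrow> real"
  assumes f_nonneg: "\<And>t. 0 \<le> f t"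
    and f: "(f has_integral I) {0..1}"
    and J: "((\<lambda>t. (t - m)^2 * f t) has_integral J) {0..1}"
    and x: "0 \<le> x" "x \<le> 1"
  shows "x < m \<Longrightarrow> integral {0..x} f \<le> J / (m - x)^2"
    and "m < x \<Longrightarrow> I - J / (x - m)^2 \<le> integral {0..x} f"
proof -
  have "f integrable_on {0..x}"
    using integrable_subinterval_real[OF has_integral_integrable[OF f]] x by auto
  then have "((\<lambda>t. if t \<in> {0..x} then f t else 0) has_integral integral {0..x} f) {0..1}"
    using x by (subst has_integral_restrict) (auto intro: integrable_integral)
  note H = this
  show "integral {0..x} f \<le> J / (m - x)^2" if xm: "x < m"
  proof (rule has_integral_le[OF H has_integral_divide[OF J]])
    fix t :: real
    show "(if t \<in> {0..x} then f t else 0) \<le> (t - m)^2 * f t / (m - x)^2"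
    proof (cases "t \<in> {0..x}")
      case True
      then have "(m - x)^2 \<le> (t - m)^2"
        using xm by (simp add: power2_commute[of t] power_mono)
      then have "1 * f t \<le> (t - m)^2 / (m - x)^2 * f t"
        using xm f_nonneg[of t] by (intro mult_right_mono) auto
      then show ?thesis by (subst if_P[OF True]) simp
    qed (subst if_not_P, simp_all add: f_nonneg)
  qed
  show "I - J / (x - m)^2 \<le> integral {0..x} f" if xm: "m < x"
  proof (rule has_integral_le[OF has_integral_diff[OF f has_integral_divide[OF J]] H])
    fix t :: real assume "t \<in> {0..1}"
    show "f t - (t - m)^2 * f t / (x - m)^2 \<le> (if t \<in> {0..x} then f t else 0)"
    proof (cases "t \<in> {0..x}")
      case False
      with xm \<open>t \<in> {0..1}\<close> have "(x - m)^2 \<le> (t - m)^2" by (intro power_mono) auto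
      then have "1 * f t \<le> (t - m)^2 / (x - m)^2 * f t"
        using xm f_nonneg[of t] by (intro mult_right_mono) auto
      then show ?thesis by (subst if_not_P[OF False]) simp
    qed (subst if_P, simp_all add: f_nonneg)
  qed
qed

lemma reg_inc_beta_tails:
  fixes a b x :: real
  assumes a: "a > 0" and b: "b > 0" and x: "0 \<le> x" "x \<le> 1"
  defines "m \<equiv> a / (a + b)"
  shows "x < m \<Longrightarrow> reg_inc_beta x a b \<le> 1 / ((a + b + 1) * (m - x)^2)"
    and "m < x \<Longrightarrow> 1 - 1 / ((a + b + 1) * (x - m)^2) \<le> reg_inc_beta x a b"
proof -
  define V where "V = a * b / ((a + b)^2 * (a + b + 1))"
  have B_pos: "Beta a b > 0" using a b by (simp add: Beta_def)
  have V_le: "V \<le> 1 / (a + b + 1)" unfolding V_def using Beta_variance_le[OF a b] .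
  have full: "inc_beta 1 a b = Beta a b"
    unfolding inc_beta_def using has_integral_Beta_real[OF a b] by (rule integral_unique)
  note tails = Chebyshev_integral_tails[OF _ has_integral_Beta_real[OF a b]
      has_integral_Beta_variance[OF a b, folded m_def V_def] x, folded inc_beta_def]
  show "reg_inc_beta x a b \<le> 1 / ((a + b + 1) * (m - x)^2)" if xm: "x < m"
  proof -
    have "reg_inc_beta x a b \<le> V / (m - x)^2"
      using tails(1)[OF _ xm] B_pos by (simp add: reg_inc_beta_def full divide_simps mult.commute)
    also have "\<dots> \<le> 1 / (a + b + 1) / (m - x)^2"
      using V_le by (intro divide_right_mono) auto
    finally show ?thesis by simp
  qed
  show "1 - 1 / ((a + b + 1) * (x - m)^2) \<le> reg_inc_beta x a b" if xm: "m < x"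
  proof -
    have "1 - 1 / ((a + b + 1) * (x - m)^2) = 1 - 1 / (a + b + 1) / (x - m)^2" by simp
    also have "\<dots> \<le> 1 - V / (x - m)^2"
      using V_le by (intro diff_left_mono divide_right_mono) auto
    also have "\<dots> \<le> reg_inc_beta x a b"
    proof -
      have "Beta a b * (1 - V / (x - m)^2) \<le> inc_beta x a b"
        using tails(2)[OF _ xm] by (simp add: algebra_simps)
      then show ?thesis using B_pos by (simp add: reg_inc_beta_def full pos_le_divide_eq mult.commute)
    qed
    finally show ?thesis .
  qed
qed

lemma reg_inc_beta_level_mean_deviation:
  fixes a b x r :: real
  assumes a: "a > 0" and b: "b > 0" and x: "0 \<le> x" "x \<le> 1" and r: "0 < r" "r < 1"
    and level: "reg_inc_beta x a b = r"
  shows "(a / (a + b) - x)^2 \<le> 1 / ((a + b + 1) * min r (1 - r))"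
proof -
  define m where "m = a / (a + b)"
  define c where "c = min r (1 - r)"
  have c: "0 < c" "c \<le> r" "c \<le> 1 - r" using r by (auto simp: c_def)
  have D: "a + b + 1 > 0" using a b by simp
  have bound: "d \<le> 1 / ((a + b + 1) * c)" if "c \<le> s" "s \<le> 1 / ((a + b + 1) * d)" "0 < d" for s d
  proof -
    have Dd: "(a + b + 1) * d > 0" using that D by simp
    have "c * ((a + b + 1) * d) \<le> s * ((a + b + 1) * d)"
      using that Dd by (intro mult_right_mono) auto
    also have "\<dots> \<le> 1" using that(2) Dd by (simp add: pos_le_divide_eq)
    finally show ?thesis using D c by (simp add: pos_le_divide_eq mult_ac)
  qed
  consider "x < m" | "x = m" | "m < x" by linarith
  then have "(m - x)^2 \<le> 1 / ((a + b + 1) * c)"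
  proof cases
    case 1
    then show ?thesis
      using bound[OF c(2)] reg_inc_beta_tails(1)[OF a b x, folded m_def] level by simp
  next
    case 3
    then show ?thesis
      using bound[OF c(3), of "(x - m)^2"] reg_inc_beta_tails(2)[OF a b x, folded m_def] level
      by (simp add: power2_commute)
  qed (use D c in simp)
  then show ?thesis by (simp add: m_def c_def)
qed

lemma reg_inc_beta_level_mean_tendsto:
  fixes a b :: "nat \<Rightarrow> real" and x r :: real
  assumes x: "0 \<le> x" "x \<le> 1" and r: "0 < r" "r < 1"
    and b: "filterlim b at_top sequentially"
    and level: "\<forall>\<^sub>F k in sequentially. 0 < a k \<and> reg_inc_beta x (a k) (b k) = r"
  shows "(\<lambda>k. a k / (a k + b k)) \<longlonglongrightarrow> x"
proof -
  define c where "c = min r (1 - r)"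
  have c: "c > 0" using r by (simp add: c_def)
  have b_pos: "\<forall>\<^sub>F k in sequentially. 0 < b k"
    using b unfolding filterlim_at_top_dense by blast
  have bound: "\<forall>\<^sub>F k in sequentially. \<bar>a k / (a k + b k) - x\<bar> \<le> sqrt (inverse (c * b k))"
    using level b_pos
  proof eventually_elim
    case (elim k)
    then have "(a k / (a k + b k) - x)^2 \<le> 1 / ((a k + b k + 1) * c)"
      using reg_inc_beta_level_mean_deviation[OF _ _ x r, of "a k" "b k"] by (simp add: c_def)
    also have "\<dots> \<le> 1 / (c * b k)"
    proof (rule divide_left_mono)
      show "c * b k \<le> (a k + b k + 1) * c" using elim c by (simp add: mult.commute)
      show "0 < (a k + b k + 1) * c * (c * b k)" using elim c by simp
    qed simp
    finally have "(a k / (a k + b k) - x)^2 \<le> inverse (c * b k)"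
      by (simp add: inverse_eq_divide)
    then have "sqrt ((a k / (a k + b k) - x)^2) \<le> sqrt (inverse (c * b k))"
      by (rule real_sqrt_le_mono)
    then show ?case by (simp only: real_sqrt_abs)
  qed
  have lim: "(\<lambda>k. sqrt (inverse (c * b k))) \<longlonglongrightarrow> 0"
    using tendsto_real_sqrt[OF tendsto_inverse_0_at_top[OF
        filterlim_tendsto_pos_mult_at_top[OF tendsto_const c b]]] by simp
  have "(\<lambda>k. \<bar>a k / (a k + b k) - x\<bar>) \<longlonglongrightarrow> 0"
    by (rule tendsto_sandwich[OF _ bound tendsto_const lim]) simp
  then have "(\<lambda>k. a k / (a k + b k) - x) \<longlonglongrightarrow> 0" by (rule tendsto_rabs_zero_cancel)
  then show ?thesis by (rule LIM_zero_cancel)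
qed

lemma tendsto_ratio_of_tendsto_proportion:
  fixes a b :: "nat \<Rightarrow> real" and x :: real
  assumes lim: "(\<lambda>k. a k / (a k + b k)) \<longlonglongrightarrow> x" and "x \<noteq> 1"
    and nonzero: "\<forall>\<^sub>F k in sequentially. a k + b k \<noteq> 0"
  shows "(\<lambda>k. a k / b k) \<longlonglongrightarrow> x / (1 - x)"
proof -
  have ratio: "a k / (a k + b k) / (1 - a k / (a k + b k)) = a k / b k" if "a k + b k \<noteq> 0" for k
  proof -
    have "1 - a k / (a k + b k) = b k / (a k + b k)" using that by (simp add: field_simps)
    then show ?thesis using that by simp
  qed
  have "(\<lambda>k. a k / (a k + b k) / (1 - a k / (a k + b k))) \<longlonglongrightarrow> x / (1 - x)"
    using lim \<open>x \<noteq> 1\<close> by (intro tendsto_intros) auto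
  moreover have "\<forall>\<^sub>F k in sequentially. a k / (a k + b k) / (1 - a k / (a k + b k)) = a k / b k"
    using nonzero by (rule eventually_mono) (rule ratio)
  ultimately show ?thesis by (rule Lim_transform_eventually)
qed

theorem theorem1:
  fixes p r :: real and n :: "nat \<Rightarrow> real"
  assumes "0 < p" "p < 1" "0 < r" "r < 1"
    and "\<And>k. k \<ge> 1 \<Longrightarrow> n k > 0"
    and "\<And>k. k \<ge> 1 \<Longrightarrow> reg_inc_beta (1 - p) (n k) (real k + 1) = r"
  shows "(\<lambda>k. n k / real k) \<longlonglongrightarrow> 1 / p - 1"
proof -
  have pos: "\<forall>\<^sub>F k in sequentially. 0 < n k" and
    level: "\<forall>\<^sub>F k in sequentially. 0 < n k \<and> reg_inc_beta (1 - p) (n k) (real k + 1) = r"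
    using assms(5,6) by (auto intro: eventually_sequentiallyI[of 1])
  have "filterlim (\<lambda>k. real k + 1) at_top sequentially"
    using filterlim_tendsto_add_at_top[OF tendsto_const filterlim_real_sequentially, of 1]
    by (simp add: add.commute)
  then have "(\<lambda>k. n k / (n k + (real k + 1))) \<longlonglongrightarrow> 1 - p"
    using assms(1-4) level by (intro reg_inc_beta_level_mean_tendsto) auto
  then have "(\<lambda>k. n k / (real k + 1)) \<longlonglongrightarrow> (1 - p) / (1 - (1 - p))"
    using assms(1) pos by (intro tendsto_ratio_of_tendsto_proportion) (auto elim: eventually_mono)
  then have "(\<lambda>k. n k / (real k + 1) * (real (Suc k) / real k)) \<longlonglongrightarrow> (1 - p) / (1 - (1 - p)) * 1"
    by (intro tendsto_mult LIMSEQ_Suc_n_over_n)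
  also have "(1 - p) / (1 - (1 - p)) * 1 = 1 / p - 1"
    using assms(1) by (simp add: field_simps)
  finally show ?thesis
  proof (rule Lim_transform_eventually)
    show "\<forall>\<^sub>F k in sequentially. n k / (real k + 1) * (real (Suc k) / real k) = n k / real k"
      by (intro eventually_sequentiallyI[of 1]) (simp add: add.commute)
  qed
qed

end
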